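(* Let $G=\mathrm{Sp}(2r)$ with $r\geqslant1$, let $\lambda\in\Lambda^+$, $\lambda\neq0$, let $q=\max\{i\leqslant r:\alpha_i\in\operatorname{Supp}(\lambda)\}$ and set $\lambda^{\mathrm{lb}}_G=\lambda-\sum_{i=q}^{r-1}\alpha_i-\tfrac12\alpha_r=\lambda+\omega_{q-1}-\omega_q$ (with $\omega_0=0$). Then $\mathrm{LB}_G(\lambda)=\{\lambda^{\mathrm{lb}}_G\}$, i.e. $\lambda^{\mathrm{lb}}_G$ is the unique little brother of $\lambda$ with respect to $G$.
   Context: $G=\mathrm{Sp}(2r)$ over an algebraically closed field of characteristic zero (simply connected, so $\mathcal{X}(T)=\Lambda$ is the weight lattice), $T\subset B$ a maximal torus and Borel subgroup, $\Phi^+$ the positive roots, simple roots $\alpha_1,\dots,\alpha_r$ numbered as in Bourbaki (type $\mathsf{C}_r$, $\alpha_r$ long; $\mathsf{C}_2=\mathsf{B}_2$, $\mathsf{C}_1=\mathsf{A}_1$), $\omega_i$ the fundamental weights, $\Lambda^+$ the dominant weights. $\Pi^+(\lambda)=\{\mu\in\Lambda^+:\lambda-\mu\in\mathbb{N}[\Delta]\}$, $\Pi_G^+(\lambda)=\{\mu\in\Lambda^+:\lambda-\mu\in\mathbb{Q}_{\geq0}[\Delta]\}$; $\operatorname{Supp}(\lambda)=\{\alpha\in\Delta:\langle\lambda,\alpha^\vee\rangle\neq0\}$; $\Phi^+(\lambda)$ is the set of positive roots whose expression in simple roots involves some element of $\operatorname{Supp}(\lambda)$; $\nu\leqslant^\lambda_\mathbb{Q}\mu$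 iff $\mu-\nu\in\mathbb{Q}_{\geq0}[\Phi^+(\lambda)]$. Adjoint little brother: if $r\geqslant2$, $\alpha_{r-1}\notin\operatorname{Supp}(\lambda)$... more precisely, for the non-simply-laced diagram numbered from the extremal long root $\alpha_r$ (so that the first short root is $\alpha_{r-1}$), if $\alpha_{r-1}\notin\operatorname{Supp}(\lambda)$ and $\alpha_r\in\operatorname{Supp}(\lambda)$ then $\mathrm{LB}(\lambda)=\{\lambda-\alpha_{r-1}-\alpha_r\}$, and otherwise $\mathrm{LB}(\lambda)=\varnothing$ (also for $r=1$). $\mathrm{LB}_G(\lambda)$ is the set of elements of $(\Pi_G^+(\lambda)\smallsetminus\Pi^+(\lambda))\cup\mathrm{LB}(\lambda)$ maximal in this set w.r.t. $\leqslant^\lambda_\mathbb{Q}$. *)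

theory Defs
  imports Complex_Main
begin

text \<open>Concrete model of the root datum of G = Sp(2r) (type C_r) in epsilon-coordinates.
Weights are integer vectors indexed by 1..r, represented as functions nat => int vanishing
outside {1..r}. Simple roots (Bourbaki): alpha_i = eps_i - eps_(i+1) for i < r, alpha_r = 2 eps_r.
Simple coroots: alpha_i^vee = eps_i - eps_(i+1) for i < r, alpha_r^vee = eps_r.\<close>

type_synonym wt = "nat \<Rightarrow> int"

definition eps :: "nat \<Rightarrow> wt" where
  "eps i = (\<lambda>k. if k = i then 1 else 0)"

definition wadd :: "wt \<Rightarrow> wt \<Rightarrow> wt" where
  "wadd v w = (\<lambda>k. v k + w k)"

definition wsub :: "wt \<Rightarrow> wt \<Rightarrow> wt" where
  "wsub v w = (\<lambda>k. v k - w k)"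

definition is_weight :: "nat \<Rightarrow> wt \<Rightarrow> bool" where
  "is_weight r v \<longleftrightarrow> (\<forall>k. k \<notin> {1..r} \<longrightarrow> v k = 0)"

definition simple_root :: "nat \<Rightarrow> nat \<Rightarrow> wt" where
  "simple_root r i = (if i < r then wsub (eps i) (eps (Suc i)) else (\<lambda>k. 2 * eps r k))"

definition coroot_pair :: "nat \<Rightarrow> wt \<Rightarrow> nat \<Rightarrow> int" where
  "coroot_pair r v i = (if i < r then v i - v (Suc i) else v r)"

definition fund_weight :: "nat \<Rightarrow> wt" where
  "fund_weight i = (\<lambda>k. if 1 \<le> k \<and> k \<le> i then 1 else 0)"

definition dominant :: "nat \<Rightarrow> wt \<Rightarrow> bool" where
  "dominant r v \<longleftrightarrow> is_weight r v \<and> (\<forall>i\<in>{1..r}. coroot_pair r v i \<ge> 0)"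

text \<open>Supp(lambda), as a set of indices of simple roots\<close>
definition supp :: "nat \<Rightarrow> wt \<Rightarrow> nat set" where
  "supp r v = {i\<in>{1..r}. coroot_pair r v i \<noteq> 0}"

definition Delta :: "nat \<Rightarrow> wt set" where
  "Delta r = simple_root r ` {1..r}"

definition pos_roots :: "nat \<Rightarrow> wt set" where
  "pos_roots r =
     {wsub (eps i) (eps j) | i j. 1 \<le> i \<and> i < j \<and> j \<le> r}
   \<union> {wadd (eps i) (eps j) | i j. 1 \<le> i \<and> i < j \<and> j \<le> r}
   \<union> {(\<lambda>k. 2 * eps i k) | i. 1 \<le> i \<and> i \<le> r}"

definition involves :: "nat \<Rightarrow> wt \<Rightarrow> nat \<Rightarrow> bool" where
  "involves r \<beta> k \<longleftrightarrow>
     (\<exists>c :: nat \<Rightarrow> rat. (\<forall>m. of_int (\<beta> m) = (\<Sum>i\<in>{1..r}. c i * of_int (simple_root r i m)))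
        \<and> c k \<noteq> 0)"

definition pos_roots_lam :: "nat \<Rightarrow> wt \<Rightarrow> wt set" where
  "pos_roots_lam r lam = {\<beta>\<in>pos_roots r. \<exists>k\<in>supp r lam. involves r \<beta> k}"

definition cone_N :: "wt set \<Rightarrow> wt \<Rightarrow> bool" where
  "cone_N A v \<longleftrightarrow> (\<exists>c :: wt \<Rightarrow> nat. \<forall>m. v m = (\<Sum>a\<in>A. int (c a) * a m))"

definition cone_Q :: "wt set \<Rightarrow> wt \<Rightarrow> bool" where
  "cone_Q A v \<longleftrightarrow> (\<exists>c :: wt \<Rightarrow> rat. (\<forall>a\<in>A. c a \<ge> 0) \<and>
       (\<forall>m. of_int (v m) = (\<Sum>a\<in>A. c a * of_int (a m))))"

definition Pi_plus :: "nat \<Rightarrow> wt \<Rightarrow> wt set" where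
  "Pi_plus r lam = {\<mu>. dominant r \<mu> \<and> cone_N (Delta r) (wsub lam \<mu>)}"

definition Pi_plus_G :: "nat \<Rightarrow> wt \<Rightarrow> wt set" where
  "Pi_plus_G r lam = {\<mu>. dominant r \<mu> \<and> cone_Q (Delta r) (wsub lam \<mu>)}"

definition leQ :: "nat \<Rightarrow> wt \<Rightarrow> wt \<Rightarrow> wt \<Rightarrow> bool" where
  "leQ r lam \<nu> \<mu> \<longleftrightarrow> cone_Q (pos_roots_lam r lam) (wsub \<mu> \<nu>)"

text \<open>adjoint little brother: alpha_(r-1) the first short root, alpha_r the extremal long root\<close>
definition LB :: "nat \<Rightarrow> wt \<Rightarrow> wt set" where
  "LB r lam = (if 2 \<le> r \<and> r - 1 \<notin> supp r lam \<and> r \<in> supp r lam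
              then {wsub (wsub lam (simple_root r (r - 1))) (simple_root r r)} else {})"

definition LB_G :: "nat \<Rightarrow> wt \<Rightarrow> wt set" where
  "LB_G r lam =
    (let S = (Pi_plus_G r lam - Pi_plus r lam) \<union> LB r lam
     in {\<mu>\<in>S. \<forall>\<nu>\<in>S. leQ r lam \<mu> \<nu> \<longrightarrow> \<nu> = \<mu>})"

end

theory Submission
  imports Defs
begin

text \<open>In \<open>\<epsilon>\<close>-coordinates a dominant \<open>\<lambda>\<close> is a weakly decreasing nonnegative vector and
  \<open>\<lambda>\<^sup>l\<^sup>b\<^sub>G = \<lambda> - \<epsilon>\<^sub>q\<close>. By Abel summation a weight lies in \<open>\<rat>\<^sub>\<ge>\<^sub>0[\<Delta>]\<close> iff its partial
  sums are nonnegative, and in \<open>\<nat>[\<Delta>]\<close> iff moreover its total sum is even; so \<open>\<lambda> - \<epsilon>\<^sub>q\<close> lies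
  in \<open>\<Pi>\<^sup>+\<^sub>G(\<lambda>) - \<Pi>\<^sup>+(\<lambda>)\<close>. For every other candidate \<open>\<mu>\<close> (including the adjoint little brother)
  the difference \<open>\<lambda> - \<epsilon>\<^sub>q - \<mu>\<close> again has nonnegative partial sums, and a north-west corner
  transport writes it as a nonnegative combination of roots \<open>\<epsilon>\<^sub>i - \<epsilon>\<^sub>j\<close> and \<open>2\<epsilon>\<^sub>i\<close>; the
  dominance of \<open>\<mu>\<close> and the maximality of \<open>q\<close> guarantee that all of them lie in \<open>\<Phi>\<^sup>+(\<lambda>)\<close>.
  Hence \<open>\<lambda> - \<epsilon>\<^sub>q\<close> is the greatest candidate, and since \<open>\<le>\<^sup>\<lambda>\<^sub>\<rat>\<close> is antisymmetric it is the
  only maximal one.\<close>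

section \<open>Partial sums\<close>

definition partial_sum :: "wt \<Rightarrow> nat \<Rightarrow> int" where
  "partial_sum v k = (\<Sum>i\<in>{1..k}. v i)"

lemma partial_sum_0 [simp]: "partial_sum v 0 = 0"
  by (simp add: partial_sum_def)

lemma partial_sum_Suc: "partial_sum v (Suc k) = partial_sum v k + v (Suc k)"
  by (simp add: partial_sum_def)

lemma partial_sum_wsub: "partial_sum (wsub u v) k = partial_sum u k - partial_sum v k"
  by (simp add: partial_sum_def wsub_def sum_subtractf)

lemma eps_commute: "eps i k = eps k i"
  by (simp add: eps_def)

lemma sum_mult_eps:
  fixes f :: "nat \<Rightarrow> 'a::ring_1"
  assumes "finite S"
  shows "(\<Sum>i\<in>S. f i * of_int (eps i m)) = (if m \<in> S then f m else 0)"
proof -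
  have "(\<Sum>i\<in>S. f i * of_int (eps i m)) = (\<Sum>i\<in>S. if m = i then f i else 0)"
    by (rule sum.cong) (auto simp: eps_def)
  then show ?thesis
    using assms by (simp add: sum.delta)
qed

lemma sum_eps: "finite S \<Longrightarrow> (\<Sum>k\<in>S. eps i k) = (if i \<in> S then 1 else 0)"
  by (simp add: eps_def sum.delta')

lemma partial_sum_eps: "partial_sum (eps i) k = (if 1 \<le> i \<and> i \<le> k then 1 else 0)"
  by (simp add: partial_sum_def sum_eps)

lemma is_weight_eps: "1 \<le> i \<Longrightarrow> i \<le> r \<Longrightarrow> is_weight r (eps i)"
  by (auto simp: is_weight_def eps_def)

lemma partial_sum_beyond_weight:
  assumes "is_weight r v" "r \<le> k"
  shows "partial_sum v k = partial_sum v r"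
proof -
  have "{1..k} = {1..r} \<union> {Suc r..k}"
    using assms(2) by auto
  moreover have "(\<Sum>i\<in>{Suc r..k}. v i) = 0"
    using assms(1) by (intro sum.neutral) (auto simp: is_weight_def)
  ultimately show ?thesis
    by (simp add: partial_sum_def sum.union_disjoint)
qed

lemma partial_sum_le_of_nonpos_tail:
  assumes "k \<le> n" "\<And>i. k < i \<Longrightarrow> i \<le> n \<Longrightarrow> v i \<le> 0"
  shows "partial_sum v n \<le> partial_sum v k"
proof -
  have "{1..n} = {1..k} \<union> {Suc k..n}"
    using assms(1) by auto
  then have "partial_sum v n = partial_sum v k + (\<Sum>i\<in>{Suc k..n}. v i)"
    by (simp add: partial_sum_def sum.union_disjoint)
  moreover have "(\<Sum>i\<in>{Suc k..n}. v i) \<le> 0"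
    using assms(2) by (intro sum_nonpos) auto
  ultimately show ?thesis
    by simp
qed

section \<open>Rational and integral cones\<close>

definition rat_cone :: "wt set \<Rightarrow> (nat \<Rightarrow> rat) \<Rightarrow> bool" where
  "rat_cone A v \<longleftrightarrow> (\<exists>c :: wt \<Rightarrow> rat. (\<forall>a\<in>A. c a \<ge> 0) \<and>
       (\<forall>m. v m = (\<Sum>a\<in>A. c a * of_int (a m))))"

lemma cone_Q_iff_rat_cone: "cone_Q A v \<longleftrightarrow> rat_cone A (\<lambda>m. of_int (v m))"
  by (simp add: cone_Q_def rat_cone_def)

lemma rat_cone_zero: "rat_cone A (\<lambda>m. 0)"
  unfolding rat_cone_def by (rule exI[of _ "\<lambda>_. 0"]) simp

lemma rat_cone_add:
  assumes "rat_cone A u" "rat_cone A w"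
  shows "rat_cone A (\<lambda>m. u m + w m)"
proof -
  obtain c d where "\<forall>a\<in>A. 0 \<le> c a" "\<forall>m. u m = (\<Sum>a\<in>A. c a * of_int (a m))"
    "\<forall>a\<in>A. 0 \<le> d a" "\<forall>m. w m = (\<Sum>a\<in>A. d a * of_int (a m))"
    using assms unfolding rat_cone_def by blast
  then show ?thesis
    unfolding rat_cone_def
    by (intro exI[of _ "\<lambda>a. c a + d a"]) (simp add: sum.distrib distrib_right)
qed

lemma rat_cone_scale:
  assumes "0 \<le> t" "rat_cone A u"
  shows "rat_cone A (\<lambda>m. t * u m)"
proof -
  obtain c where "\<forall>a\<in>A. 0 \<le> c a" "\<forall>m. u m = (\<Sum>a\<in>A. c a * of_int (a m))"
    using assms(2) unfolding rat_cone_def by blast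
  then show ?thesis
    unfolding rat_cone_def using assms(1)
    by (intro exI[of _ "\<lambda>a. t * c a"]) (simp add: sum_distrib_left mult.assoc)
qed

lemma rat_cone_generator:
  assumes "finite A" "a \<in> A"
  shows "rat_cone A (\<lambda>m. of_int (a m))"
  unfolding rat_cone_def
proof (intro exI[of _ "\<lambda>b. if b = a then 1 else 0"] conjI allI)
  fix m
  have "(\<Sum>b\<in>A. (if b = a then 1 else 0) * (of_int (b m) :: rat))
      = (\<Sum>b\<in>A. if b = a then of_int (b m) else 0)"
    by (rule sum.cong) auto
  then show "of_int (a m) = (\<Sum>b\<in>A. (if b = a then 1 else 0) * (of_int (b m) :: rat))"
    using assms by (simp add: sum.delta)
qed simp

lemma rat_cone_sum:
  "finite I \<Longrightarrow> (\<And>i. i \<in> I \<Longrightarrow> rat_cone A (f i)) \<Longrightarrow> rat_cone A (\<lambda>m. \<Sum>i\<in>I. f i m)"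
  by (induction I rule: finite_induct) (simp_all add: rat_cone_zero rat_cone_add)

lemma cone_N_zero: "cone_N A (\<lambda>m. 0)"
  unfolding cone_N_def by (rule exI[of _ "\<lambda>_. 0"]) simp

lemma cone_N_add:
  assumes "cone_N A u" "cone_N A w"
  shows "cone_N A (\<lambda>m. u m + w m)"
proof -
  obtain c d where "\<forall>m. u m = (\<Sum>a\<in>A. int (c a) * a m)" "\<forall>m. w m = (\<Sum>a\<in>A. int (d a) * a m)"
    using assms unfolding cone_N_def by blast
  then show ?thesis
    unfolding cone_N_def
    by (intro exI[of _ "\<lambda>a. c a + d a"]) (simp add: sum.distrib distrib_right)
qed

lemma cone_N_scale:
  assumes "cone_N A u"
  shows "cone_N A (\<lambda>m. int t * u m)"
proof -
  obtain c where "\<forall>m. u m = (\<Sum>a\<in>A. int (c a) * a m)"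
    using assms unfolding cone_N_def by blast
  then show ?thesis
    unfolding cone_N_def
    by (intro exI[of _ "\<lambda>a. t * c a"]) (simp add: sum_distrib_left mult.assoc)
qed

lemma cone_N_generator:
  assumes "finite A" "a \<in> A"
  shows "cone_N A a"
  unfolding cone_N_def
proof (intro exI[of _ "\<lambda>b. if b = a then 1 else 0"] allI)
  fix m
  have "(\<Sum>b\<in>A. int (if b = a then 1 else 0) * b m) = (\<Sum>b\<in>A. if b = a then b m else 0)"
    by (rule sum.cong) auto
  then show "a m = (\<Sum>b\<in>A. int (if b = a then 1 else 0) * b m)"
    using assms by (simp add: sum.delta)
qed

lemma cone_N_sum:
  "finite I \<Longrightarrow> (\<And>i. i \<in> I \<Longrightarrow> cone_N A (f i)) \<Longrightarrow> cone_N A (\<lambda>m. \<Sum>i\<in>I. f i m)"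
  by (induction I rule: finite_induct) (simp_all add: cone_N_zero cone_N_add)

section \<open>Transporting positive onto negative mass\<close>

definition pos_mass :: "wt \<Rightarrow> nat \<Rightarrow> int" where
  "pos_mass x k = (\<Sum>i\<in>{1..k}. max (x i) 0)"

definition neg_mass :: "wt \<Rightarrow> nat \<Rightarrow> int" where
  "neg_mass x k = (\<Sum>i\<in>{1..k}. max (- x i) 0)"

definition overlap :: "int \<Rightarrow> int \<Rightarrow> int \<Rightarrow> int \<Rightarrow> int" where
  "overlap a b c d = max 0 (min b d - max a c)"

text \<open>North-west corner rule: the positive part of the entry \<open>x i\<close> occupies the interval
  from \<open>pos_mass x (i - 1)\<close> to \<open>pos_mass x i\<close>, the negative part of \<open>x j\<close> the interval from
  \<open>neg_mass x (j - 1)\<close> to \<open>neg_mass x j\<close>, and \<open>i\<close> sends to \<open>j\<close> the length of their overlap.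
  The unmatched part \<open>max (x i) 0 - matched_mass x r i\<close> of the positive mass is carried by \<open>2\<epsilon>\<^sub>i\<close>.\<close>

definition transport_plan :: "wt \<Rightarrow> nat \<Rightarrow> nat \<Rightarrow> int" where
  "transport_plan x i j =
     overlap (pos_mass x (i - 1)) (pos_mass x i) (neg_mass x (j - 1)) (neg_mass x j)"

definition matched_mass :: "wt \<Rightarrow> nat \<Rightarrow> nat \<Rightarrow> int" where
  "matched_mass x r i = overlap (pos_mass x (i - 1)) (pos_mass x i) 0 (neg_mass x r)"

lemma pos_mass_0 [simp]: "pos_mass x 0 = 0"
  by (simp add: pos_mass_def)

lemma neg_mass_0 [simp]: "neg_mass x 0 = 0"
  by (simp add: neg_mass_def)

lemma pos_mass_Suc: "pos_mass x (Suc k) = pos_mass x k + max (x (Suc k)) 0"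
  by (simp add: pos_mass_def)

lemma neg_mass_Suc: "neg_mass x (Suc k) = neg_mass x k + max (- x (Suc k)) 0"
  by (simp add: neg_mass_def)

lemma pos_mass_pred: "1 \<le> i \<Longrightarrow> pos_mass x i = pos_mass x (i - 1) + max (x i) 0"
  using pos_mass_Suc[of x "i - 1"] by simp

lemma neg_mass_pred: "1 \<le> i \<Longrightarrow> neg_mass x i = neg_mass x (i - 1) + max (- x i) 0"
  using neg_mass_Suc[of x "i - 1"] by simp

lemma pos_mass_mono: "a \<le> b \<Longrightarrow> pos_mass x a \<le> pos_mass x b"
  by (induction b rule: dec_induct) (auto simp: pos_mass_Suc intro: order_trans)

lemma neg_mass_mono: "a \<le> b \<Longrightarrow> neg_mass x a \<le> neg_mass x b"
  by (induction b rule: dec_induct) (auto simp: neg_mass_Suc intro: order_trans)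

lemma pos_mass_nonneg: "0 \<le> pos_mass x k"
  using pos_mass_mono[of 0 k x] by simp

lemma neg_mass_nonneg: "0 \<le> neg_mass x k"
  using neg_mass_mono[of 0 k x] by simp

lemma partial_sum_eq_mass_diff: "partial_sum x k = pos_mass x k - neg_mass x k"
proof -
  have "partial_sum x k = (\<Sum>i\<in>{1..k}. max (x i) 0 - max (- x i) 0)"
    unfolding partial_sum_def by (rule sum.cong) auto
  then show ?thesis
    by (simp add: pos_mass_def neg_mass_def sum_subtractf)
qed

lemma overlap_nonneg: "0 \<le> overlap a b c d"
  by (simp add: overlap_def)

lemma overlap_commute: "overlap a b c d = overlap c d a b"
  by (auto simp: overlap_def max_def min_def)

lemma overlap_split: "c \<le> d \<Longrightarrow> d \<le> e \<Longrightarrow> overlap a b c d + overlap a b d e = overlap a b c e"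
  by (auto simp: overlap_def max_def min_def)

lemma sum_overlap_telescope:
  fixes c :: "nat \<Rightarrow> int"
  assumes "mono c"
  shows "(\<Sum>j\<in>{1..n}. overlap a b (c (j - 1)) (c j)) = overlap a b (c 0) (c n)"
proof (induction n)
  case 0
  then show ?case
    by (simp add: overlap_def)
next
  case (Suc n)
  then have "(\<Sum>j\<in>{1..Suc n}. overlap a b (c (j - 1)) (c j))
      = overlap a b (c 0) (c n) + overlap a b (c n) (c (Suc n))"
    by simp
  also have "\<dots> = overlap a b (c 0) (c (Suc n))"
    using monoD[OF assms, of 0 n] monoD[OF assms, of n "Suc n"] by (intro overlap_split) auto
  finally show ?case .
qed

lemma sum_transport_plan_row: "(\<Sum>j\<in>{1..r}. transport_plan x i j) = matched_mass x r i"
proof -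
  have "mono (neg_mass x)"
    by (rule monoI) (rule neg_mass_mono)
  then show ?thesis
    unfolding transport_plan_def matched_mass_def
    using sum_overlap_telescope[of "neg_mass x"] by simp
qed

lemma sum_transport_plan_col:
  assumes "1 \<le> j" "j \<le> r" "neg_mass x r \<le> pos_mass x r"
  shows "(\<Sum>i\<in>{1..r}. transport_plan x i j) = max (- x j) 0"
proof -
  have "(\<Sum>i\<in>{1..r}. transport_plan x i j)
      = (\<Sum>i\<in>{1..r}. overlap (neg_mass x (j - 1)) (neg_mass x j) (pos_mass x (i - 1)) (pos_mass x i))"
    unfolding transport_plan_def by (intro sum.cong refl) (rule overlap_commute)
  also have "\<dots> = overlap (neg_mass x (j - 1)) (neg_mass x j) (pos_mass x 0) (pos_mass x r)"
    by (rule sum_overlap_telescope) (rule monoI, rule pos_mass_mono)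
  also have "\<dots> = max (- x j) 0"
    using assms neg_mass_mono[of j r x] neg_mass_pred[of j x] neg_mass_nonneg[of x "j - 1"]
    by (simp add: overlap_def max_def min_def)
  finally show ?thesis .
qed

lemma transport_plan_pos:
  assumes "0 < transport_plan x i j" "1 \<le> i" "1 \<le> j" "\<And>k. 0 \<le> partial_sum x k"
  shows "i < j" "0 < x i" "x j < 0"
proof -
  have P: "pos_mass x (i - 1) < pos_mass x i" "neg_mass x (j - 1) < neg_mass x j"
    "pos_mass x (i - 1) < neg_mass x j"
    using assms(1) unfolding transport_plan_def overlap_def by (auto simp: max_def min_def split: if_splits)
  show "0 < x i"
    using P(1) pos_mass_pred[OF assms(2)] by simp
  show xj: "x j < 0"
    using P(2) neg_mass_pred[OF assms(3)] by simp
  have "neg_mass x j \<le> pos_mass x j"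
    using assms(4)[of j] by (simp add: partial_sum_eq_mass_diff)
  also have "pos_mass x j = pos_mass x (j - 1)"
    using xj pos_mass_pred[OF assms(3)] by simp
  finally have "pos_mass x (i - 1) < pos_mass x (j - 1)"
    using P(3) by simp
  then show "i < j"
    using pos_mass_mono[of "j - 1" "i - 1" x] by linarith
qed

lemma matched_mass_le: "1 \<le> i \<Longrightarrow> matched_mass x r i \<le> max (x i) 0"
  using pos_mass_pred[of i x] pos_mass_nonneg[of x "i - 1"]
  by (simp add: matched_mass_def overlap_def max_def min_def)

lemma sum_transport_plan_roots:
  assumes "neg_mass x r \<le> pos_mass x r"
  shows "(\<Sum>i\<in>{1..r}. \<Sum>j\<in>{1..r}. of_int (transport_plan x i j) * (of_int (wsub (eps i) (eps j) m) :: rat))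
    = (if m \<in> {1..r} then of_int (matched_mass x r m - max (- x m) 0) else 0)"
proof -
  define I where "I = {1..r}"
  define p where "p i j = (of_int (transport_plan x i j) :: rat)" for i j
  have row: "(\<Sum>j\<in>I. p i j) = of_int (matched_mass x r i)" for i
    unfolding p_def I_def of_int_sum[symmetric] sum_transport_plan_row ..
  have col: "(\<Sum>i\<in>I. p i j) = of_int (max (- x j) 0)" if "j \<in> I" for j
    using sum_transport_plan_col[OF _ _ assms] that
    unfolding p_def I_def of_int_sum[symmetric] by simp
  have "(\<Sum>i\<in>I. \<Sum>j\<in>I. p i j * of_int (wsub (eps i) (eps j) m))
      = (\<Sum>i\<in>I. \<Sum>j\<in>I. p i j * of_int (eps i m)) - (\<Sum>i\<in>I. \<Sum>j\<in>I. p i j * of_int (eps j m))"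
    by (simp add: wsub_def right_diff_distrib sum_subtractf)
  also have "(\<Sum>i\<in>I. \<Sum>j\<in>I. p i j * of_int (eps i m)) = (\<Sum>i\<in>I. (\<Sum>j\<in>I. p i j) * of_int (eps i m))"
    by (simp add: sum_distrib_right)
  also have "(\<Sum>i\<in>I. \<Sum>j\<in>I. p i j * of_int (eps j m)) = (\<Sum>j\<in>I. (\<Sum>i\<in>I. p i j) * of_int (eps j m))"
    by (subst sum.swap) (simp add: sum_distrib_right)
  also have "\<dots> = (\<Sum>j\<in>I. of_int (max (- x j) 0) * of_int (eps j m))"
    by (rule sum.cong) (simp_all add: col)
  finally have "(\<Sum>i\<in>I. \<Sum>j\<in>I. p i j * of_int (wsub (eps i) (eps j) m))
      = (if m \<in> I then of_int (matched_mass x r m - max (- x m) 0) else 0)"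
    using row by (simp add: sum_mult_eps I_def)
  then show ?thesis
    by (simp only: p_def I_def)
qed

lemma transport_decomposition:
  assumes "is_weight r x" "neg_mass x r \<le> pos_mass x r"
  shows "(of_int (x m) :: rat) =
      (\<Sum>i\<in>{1..r}. \<Sum>j\<in>{1..r}. of_int (transport_plan x i j) * of_int (wsub (eps i) (eps j) m))
    + (\<Sum>i\<in>{1..r}. of_int (max (x i) 0 - matched_mass x r i) / 2 * of_int (2 * eps i m))"
proof -
  have rest: "(\<Sum>i\<in>{1..r}. of_int (max (x i) 0 - matched_mass x r i) / 2 * (of_int (2 * eps i m) :: rat))
      = (if m \<in> {1..r} then of_int (max (x m) 0 - matched_mass x r m) else 0)"
    using sum_mult_eps[of "{1..r}" "\<lambda>i. of_int (max (x i) 0 - matched_mass x r i) :: rat" m] by simp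
  have "(of_int (x m) :: rat) = (if m \<in> {1..r} then of_int (matched_mass x r m - max (- x m) 0) else 0)
      + (if m \<in> {1..r} then of_int (max (x m) 0 - matched_mass x r m) else 0)"
  proof (cases "m \<in> {1..r}")
    case True
    have "x m = (matched_mass x r m - max (- x m) 0) + (max (x m) 0 - matched_mass x r m)"
      by linarith
    with True show ?thesis
      by (simp only: if_True of_int_add[symmetric])
  next
    case False
    then have "x m = 0"
      using assms(1) by (simp add: is_weight_def)
    with False show ?thesis
      by (simp del: atLeastAtMost_iff)
  qed
  then show ?thesis
    by (simp only: sum_transport_plan_roots[OF assms(2)] rest)
qed

lemma rat_cone_of_nonneg_partial_sums:
  assumes "finite A" "is_weight r x" "\<forall>k\<le>r. 0 \<le> partial_sum x k"
    and pairs: "\<And>i j. 1 \<le> i \<Longrightarrow> i < j \<Longrightarrow> j \<le> r \<Longrightarrow> 0 < x i \<Longrightarrow> x j < 0 \<Longrightarrow> wsub (eps i) (eps j) \<in> A"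
    and doubles: "\<And>i. 1 \<le> i \<Longrightarrow> i \<le> r \<Longrightarrow> 0 < x i \<Longrightarrow> (\<lambda>k. 2 * eps i k) \<in> A"
  shows "rat_cone A (\<lambda>m. of_int (x m))"
proof -
  have nonneg: "0 \<le> partial_sum x k" for k
    using assms(3) partial_sum_beyond_weight[OF assms(2), of k] by (cases "k \<le> r") auto
  have balanced: "neg_mass x r \<le> pos_mass x r"
    using nonneg[of r] by (simp add: partial_sum_eq_mass_diff)
  have "rat_cone A (\<lambda>m. of_int (transport_plan x i j) * of_int (wsub (eps i) (eps j) m))"
    if "i \<in> {1..r}" "j \<in> {1..r}" for i j
  proof (cases "transport_plan x i j = 0")
    case False
    then have "0 < transport_plan x i j"
      using overlap_nonneg by (simp add: transport_plan_def order_less_le)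
    with that have "wsub (eps i) (eps j) \<in> A"
      using transport_plan_pos[of x i j] nonneg by (intro pairs) auto
    then show ?thesis
      by (intro rat_cone_scale rat_cone_generator assms(1)) (simp_all add: transport_plan_def overlap_nonneg)
  qed (simp add: rat_cone_zero)
  then have plan_part: "rat_cone A (\<lambda>m. \<Sum>i\<in>{1..r}. \<Sum>j\<in>{1..r}.
      of_int (transport_plan x i j) * of_int (wsub (eps i) (eps j) m))"
    by (intro rat_cone_sum) auto
  have "rat_cone A (\<lambda>m. of_int (max (x i) 0 - matched_mass x r i) / 2 * of_int (2 * eps i m))"
    if "i \<in> {1..r}" for i
  proof (cases "0 < x i")
    case True
    with that have "(\<lambda>k. 2 * eps i k) \<in> A"
      by (intro doubles) auto
    then have "rat_cone A (\<lambda>m. of_int (2 * eps i m))"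
      by (rule rat_cone_generator[OF assms(1)])
    then show ?thesis
      using that matched_mass_le[of i x r] by (intro rat_cone_scale) auto
  next
    case False
    then have "matched_mass x r i = 0"
      using that matched_mass_le[of i x r] overlap_nonneg
      unfolding matched_mass_def by (intro order_antisym) auto
    with False show ?thesis
      by (simp add: rat_cone_zero)
  qed
  then have rest: "rat_cone A (\<lambda>m. \<Sum>i\<in>{1..r}.
      of_int (max (x i) 0 - matched_mass x r i) / 2 * of_int (2 * eps i m))"
    by (intro rat_cone_sum) auto
  show ?thesis
    using rat_cone_add[OF plan_part rest] transport_decomposition[OF assms(2) balanced] by simp
qed

section \<open>The roots of \<open>\<Phi>\<^sup>+(\<lambda>)\<close>\<close>

lemma finite_pos_roots: "finite (pos_roots r)"
proof -
  have "pos_roots r \<subseteq> (\<lambda>(i, j). wsub (eps i) (eps j)) ` ({1..r} \<times> {1..r})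
      \<union> (\<lambda>(i, j). wadd (eps i) (eps j)) ` ({1..r} \<times> {1..r}) \<union> (\<lambda>i k. 2 * eps i k) ` {1..r}"
    unfolding pos_roots_def by fastforce
  then show ?thesis
    by (rule finite_subset) auto
qed

lemma finite_pos_roots_lam: "finite (pos_roots_lam r lam)"
  using finite_pos_roots by (rule finite_subset[rotated]) (auto simp: pos_roots_lam_def)

lemma sum_simple_roots_interval:
  assumes "1 \<le> i" "i \<le> j" "j \<le> r"
  shows "(\<Sum>l\<in>{1..r}. (if i \<le> l \<and> l < j then 1 else 0) * (of_int (simple_root r l m) :: rat))
    = of_int (eps i m) - of_int (eps j m)"
proof -
  have "(\<Sum>l\<in>{1..r}. (if i \<le> l \<and> l < j then 1 else 0) * (of_int (simple_root r l m) :: rat))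
      = (\<Sum>l\<in>{1..r}. if l \<in> {i..<j} then of_int (simple_root r l m) else 0)"
    by (intro sum.cong) auto
  also have "\<dots> = (\<Sum>l\<in>{1..r} \<inter> {i..<j}. of_int (simple_root r l m))"
    by (simp add: sum.inter_restrict)
  also have "\<dots> = (\<Sum>l\<in>{i..<j}. of_int (simple_root r l m))"
    using assms by (intro sum.cong) auto
  also have "\<dots> = (\<Sum>l\<in>{i..<j}. of_int (eps l m) - of_int (eps (Suc l) m))"
    using assms by (intro sum.cong refl) (simp add: simple_root_def wsub_def)
  also have "\<dots> = of_int (eps i m) - of_int (eps j m)"
    using sum_Suc_diff'[OF assms(2), of "\<lambda>l. of_int (eps l m) :: rat"]
    unfolding sum_subtractf by linarith
  finally show ?thesis .
qed

lemma involves_eps_diff: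
  assumes "1 \<le> i" "i \<le> k" "k < j" "j \<le> r"
  shows "involves r (wsub (eps i) (eps j)) k"
  unfolding involves_def
proof (intro exI[of _ "\<lambda>l. if i \<le> l \<and> l < j then 1 else 0 :: rat"] conjI allI)
  show "(of_int (wsub (eps i) (eps j) m) :: rat) =
      (\<Sum>l\<in>{1..r}. (if i \<le> l \<and> l < j then 1 else 0) * of_int (simple_root r l m))" for m
    using sum_simple_roots_interval[of i j r m] assms by (simp add: wsub_def)
qed (use assms in auto)

lemma involves_double_eps:
  assumes "1 \<le> i" "i \<le> k" "k \<le> r"
  shows "involves r (\<lambda>m. 2 * eps i m) k"
  unfolding involves_def
proof (intro exI[of _ "\<lambda>l. 2 * (if i \<le> l \<and> l < r then 1 else 0) + (if l = r then 1 else 0 :: rat)"] conjI allI)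
  fix m
  have "(\<Sum>l\<in>{1..r}. (2 * (if i \<le> l \<and> l < r then 1 else 0) + (if l = r then 1 else 0))
        * (of_int (simple_root r l m) :: rat))
      = 2 * (\<Sum>l\<in>{1..r}. (if i \<le> l \<and> l < r then 1 else 0) * of_int (simple_root r l m))
        + (\<Sum>l\<in>{1..r}. (if l = r then 1 else 0) * of_int (simple_root r l m))"
    by (simp add: distrib_right sum.distrib sum_distrib_left mult.assoc)
  also have "\<dots> = 2 * (of_int (eps i m) - of_int (eps r m)) + of_int (simple_root r r m)"
  proof -
    have "(\<Sum>l\<in>{1..r}. (if l = r then 1 else 0) * (of_int (simple_root r l m) :: rat))
        = (\<Sum>l\<in>{1..r}. if l = r then of_int (simple_root r l m) else 0)"
      by (intro sum.cong) auto
    also have "\<dots> = of_int (simple_root r r m)"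
      using assms by simp
    finally have "(\<Sum>l\<in>{1..r}. (if l = r then 1 else 0) * (of_int (simple_root r l m) :: rat))
        = of_int (simple_root r r m)" .
    then show ?thesis
      using assms sum_simple_roots_interval[of i r r m] by simp
  qed
  also have "\<dots> = of_int (2 * eps i m)"
    by (simp add: simple_root_def)
  finally show "of_int (2 * eps i m) = (\<Sum>l\<in>{1..r}.
      (2 * (if i \<le> l \<and> l < r then 1 else 0) + (if l = r then 1 else 0)) * (of_int (simple_root r l m) :: rat))"
    by simp
qed (use assms in auto)

lemma supp_between:
  assumes "1 \<le> i" "i < j" "j \<le> r" "lam i \<noteq> lam j"
  shows "\<exists>k\<in>supp r lam. i \<le> k \<and> k < j"
proof (rule ccontr)
  assume "\<not> ?thesis"
  then have step: "lam k = lam (Suc k)" if "i \<le> k" "k < j" for k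
    using assms that unfolding supp_def coroot_pair_def by fastforce
  have "lam (i + n) = lam i" if "i + n \<le> j" for n
    using that by (induction n) (auto simp: step)
  from this[of "j - i"] assms show False
    by simp
qed

lemma supp_above:
  assumes "1 \<le> i" "i \<le> r" "lam i \<noteq> 0"
  shows "\<exists>k\<in>supp r lam. i \<le> k"
proof (cases "lam r = 0")
  case True
  with assms have "i < r"
    by (cases "i = r") auto
  with assms True show ?thesis
    using supp_between[of i r r lam] by fastforce
next
  case False
  with assms show ?thesis
    by (intro bexI[of _ r]) (auto simp: supp_def coroot_pair_def)
qed

lemma eps_diff_in_pos_roots_lam:
  assumes "1 \<le> i" "i < j" "j \<le> r" "lam i \<noteq> lam j"
  shows "wsub (eps i) (eps j) \<in> pos_roots_lam r lam"
proof -
  obtain k where "k \<in> supp r lam" "i \<le> k" "k < j"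
    using supp_between[OF assms] by blast
  moreover have "wsub (eps i) (eps j) \<in> pos_roots r"
    unfolding pos_roots_def using assms by blast
  ultimately show ?thesis
    unfolding pos_roots_lam_def using involves_eps_diff assms by blast
qed

lemma double_eps_in_pos_roots_lam:
  assumes "1 \<le> i" "i \<le> r" "lam i \<noteq> 0"
  shows "(\<lambda>m. 2 * eps i m) \<in> pos_roots_lam r lam"
proof -
  obtain k where k: "k \<in> supp r lam" "i \<le> k"
    using supp_above[of i r lam] assms by blast
  then have "involves r (\<lambda>m. 2 * eps i m) k"
    using assms by (intro involves_double_eps) (auto simp: supp_def)
  moreover have "(\<lambda>m. 2 * eps i m) \<in> pos_roots r"
    unfolding pos_roots_def using assms by blast
  ultimately show ?thesis
    unfolding pos_roots_lam_def using k by blast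
qed

lemma cone_Q_pos_roots_lam:
  assumes "is_weight r x" "\<forall>k\<le>r. 0 \<le> partial_sum x k"
    and "\<And>i j. 1 \<le> i \<Longrightarrow> i < j \<Longrightarrow> j \<le> r \<Longrightarrow> 0 < x i \<Longrightarrow> x j < 0 \<Longrightarrow> lam i \<noteq> lam j"
    and "\<And>i. 1 \<le> i \<Longrightarrow> i \<le> r \<Longrightarrow> 0 < x i \<Longrightarrow> lam i \<noteq> 0"
  shows "cone_Q (pos_roots_lam r lam) x"
  unfolding cone_Q_iff_rat_cone
  using finite_pos_roots_lam assms(1,2)
  by (rule rat_cone_of_nonneg_partial_sums)
    (use assms(3,4) eps_diff_in_pos_roots_lam double_eps_in_pos_roots_lam in auto)

section \<open>Antisymmetry of \<open>\<le>\<^sup>\<lambda>\<^sub>\<rat>\<close>\<close>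

text \<open>\<open>(r, r - 1, \<dots>, 1)\<close> is a regular dominant coweight, so it pairs positively with every positive root.\<close>

definition rho_pair :: "nat \<Rightarrow> wt \<Rightarrow> rat" where
  "rho_pair r v = (\<Sum>k\<in>{1..r}. of_nat (r + 1 - k) * of_int (v k))"

lemma rho_pair_pos:
  assumes "\<beta> \<in> pos_roots r"
  shows "0 < rho_pair r \<beta>"
proof -
  have eps: "rho_pair r (eps i) = of_nat (r + 1 - i)" if "1 \<le> i" "i \<le> r" for i
    unfolding rho_pair_def using that by (subst eps_commute) (simp add: sum_mult_eps)
  have wsub: "rho_pair r (wsub u v) = rho_pair r u - rho_pair r v" for u v
    by (simp add: rho_pair_def wsub_def right_diff_distrib sum_subtractf)
  have wadd: "rho_pair r (wadd u v) = rho_pair r u + rho_pair r v" for u v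
    by (simp add: rho_pair_def wadd_def distrib_left sum.distrib)
  have double: "rho_pair r (\<lambda>k. 2 * u k) = 2 * rho_pair r u" for u
    by (simp add: rho_pair_def sum_distrib_left mult.left_commute)
  from assms show ?thesis
    unfolding pos_roots_def
    by (elim UnE CollectE exE conjE) (simp_all add: wsub wadd double eps of_nat_diff)
qed

lemma rat_cone_antisym:
  assumes "finite A" "A \<subseteq> pos_roots r" "rat_cone A u" "rat_cone A (\<lambda>m. - u m)"
  shows "u = (\<lambda>m. 0)"
proof -
  obtain c d where c: "\<forall>a\<in>A. 0 \<le> c a" "\<forall>m. u m = (\<Sum>a\<in>A. c a * of_int (a m))"
    and d: "\<forall>a\<in>A. 0 \<le> d a" "\<forall>m. - u m = (\<Sum>a\<in>A. d a * of_int (a m))"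
    using assms(3,4) unfolding rat_cone_def by blast
  have vanish: "(\<Sum>a\<in>A. (c a + d a) * of_int (a k)) = 0" for k
  proof -
    have "(\<Sum>a\<in>A. (c a + d a) * of_int (a k))
        = (\<Sum>a\<in>A. c a * of_int (a k)) + (\<Sum>a\<in>A. d a * of_int (a k))"
      by (simp add: distrib_right sum.distrib)
    then show ?thesis
      using c(2) d(2) by (metis add.right_inverse)
  qed
  have "(\<Sum>a\<in>A. (c a + d a) * rho_pair r a)
      = (\<Sum>a\<in>A. \<Sum>k\<in>{1..r}. of_nat (r + 1 - k) * ((c a + d a) * of_int (a k)))"
    by (simp add: rho_pair_def sum_distrib_left mult.left_commute)
  also have "\<dots> = (\<Sum>k\<in>{1..r}. \<Sum>a\<in>A. of_nat (r + 1 - k) * ((c a + d a) * of_int (a k)))"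
    by (rule sum.swap)
  also have "\<dots> = 0"
    by (simp add: vanish flip: sum_distrib_left)
  finally have "(\<Sum>a\<in>A. (c a + d a) * rho_pair r a) = 0" .
  moreover have pos: "0 \<le> c a + d a" "0 < rho_pair r a" if "a \<in> A" for a
    using c(1) d(1) rho_pair_pos[of a r] assms(2) that by auto
  ultimately have prod_zero: "(c a + d a) * rho_pair r a = 0" if "a \<in> A" for a
    using sum_nonneg_eq_0_iff[OF assms(1), of "\<lambda>a. (c a + d a) * rho_pair r a"] that
    by (simp add: less_imp_le)
  have "c a = 0" if "a \<in> A" for a
  proof -
    have "c a + d a = 0"
      using prod_zero[OF that] pos(2)[OF that] by simp
    then show ?thesis
      using c(1) d(1) that by (simp add: add_nonneg_eq_0_iff)
  qed
  then have "u m = 0" for m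
    using c(2) by (simp add: sum.neutral)
  then show ?thesis
    by (rule ext)
qed

lemma leQ_antisym:
  assumes "leQ r lam \<mu> \<nu>" "leQ r lam \<nu> \<mu>"
  shows "\<mu> = \<nu>"
proof -
  have "rat_cone (pos_roots_lam r lam) (\<lambda>m. of_int (\<nu> m - \<mu> m))"
    "rat_cone (pos_roots_lam r lam) (\<lambda>m. - of_int (\<nu> m - \<mu> m))"
    using assms by (simp_all add: leQ_def cone_Q_iff_rat_cone wsub_def)
  then have "(\<lambda>m. of_int (\<nu> m - \<mu> m) :: rat) = (\<lambda>m. 0)"
    using finite_pos_roots_lam by (rule rat_cone_antisym[rotated 2]) (auto simp: pos_roots_lam_def)
  then show ?thesis
    by (simp add: fun_eq_iff)
qed

section \<open>Cones spanned by the simple roots\<close>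

lemma partial_sum_simple_root_nonneg:
  assumes "1 \<le> l"
  shows "0 \<le> partial_sum (simple_root r l) k"
  using assms by (simp add: simple_root_def partial_sum_def wsub_def sum_subtractf sum_eps flip: sum_distrib_left)

lemma even_partial_sum_simple_root:
  assumes "l \<in> {1..r}"
  shows "even (partial_sum (simple_root r l) r)"
  using assms by (simp add: simple_root_def partial_sum_def wsub_def sum_subtractf sum_eps flip: sum_distrib_left)

lemma partial_sum_nonneg_of_cone_Q_Delta:
  assumes "cone_Q (Delta r) v"
  shows "0 \<le> partial_sum v k"
proof -
  obtain c :: "wt \<Rightarrow> rat" where c: "\<forall>a\<in>Delta r. 0 \<le> c a"
    "\<forall>m. of_int (v m) = (\<Sum>a\<in>Delta r. c a * of_int (a m))"
    using assms unfolding cone_Q_def by blast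
  have "(of_int (partial_sum v k) :: rat) = (\<Sum>i\<in>{1..k}. \<Sum>a\<in>Delta r. c a * of_int (a i))"
    using c(2) by (simp add: partial_sum_def)
  also have "\<dots> = (\<Sum>a\<in>Delta r. c a * of_int (partial_sum a k))"
    by (subst sum.swap) (simp add: partial_sum_def sum_distrib_left)
  also have "\<dots> \<ge> 0"
    using c(1) partial_sum_simple_root_nonneg by (intro sum_nonneg) (auto simp: Delta_def)
  finally show ?thesis
    by simp
qed

lemma even_partial_sum_of_cone_N_Delta:
  assumes "cone_N (Delta r) v"
  shows "even (partial_sum v r)"
proof -
  obtain c where c: "\<forall>m. v m = (\<Sum>a\<in>Delta r. int (c a) * a m)"
    using assms unfolding cone_N_def by blast
  have "partial_sum v r = (\<Sum>i\<in>{1..r}. \<Sum>a\<in>Delta r. int (c a) * a i)"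
    using c by (simp add: partial_sum_def)
  also have "\<dots> = (\<Sum>a\<in>Delta r. int (c a) * partial_sum a r)"
    by (subst sum.swap) (simp add: partial_sum_def sum_distrib_left)
  finally show ?thesis
    using even_partial_sum_simple_root by (auto simp: Delta_def intro!: dvd_sum)
qed

text \<open>Abel summation; the last term is \<open>partial_sum v r\<close> times \<open>\<epsilon>\<^sub>r = \<alpha>\<^sub>r / 2\<close>.\<close>

lemma weight_eq_sum_partial_sums:
  assumes "is_weight r v"
  shows "v m = (\<Sum>l\<in>{1..<r}. partial_sum v l * simple_root r l m) + partial_sum v r * eps r m"
proof -
  have "(\<Sum>l\<in>{1..<r}. partial_sum v l * simple_root r l m)
      = (\<Sum>l\<in>{1..<r}. partial_sum v l * eps l m) - (\<Sum>l\<in>{1..<r}. partial_sum v l * eps (Suc l) m)"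
    by (simp add: simple_root_def wsub_def right_diff_distrib sum_subtractf)
  also have "(\<Sum>l\<in>{1..<r}. partial_sum v l * eps (Suc l) m)
      = (\<Sum>l\<in>{2..<Suc r}. partial_sum v (l - 1) * eps l m)"
    by (rule sum.reindex_bij_witness[of _ "\<lambda>l. l - 1" Suc]) auto
  finally have "(\<Sum>l\<in>{1..<r}. partial_sum v l * simple_root r l m)
      = (if m \<in> {1..<r} then partial_sum v m else 0) - (if m \<in> {2..<Suc r} then partial_sum v (m - 1) else 0)"
    using sum_mult_eps[of "{1..<r}" "partial_sum v" m] sum_mult_eps[of "{2..<Suc r}" "\<lambda>l. partial_sum v (l - 1)" m]
    by simp
  moreover have "v m = partial_sum v m - partial_sum v (m - 1)" if "1 \<le> m"
    using that partial_sum_Suc[of v "m - 1"] by simp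
  ultimately show ?thesis
    using assms by (cases "m = 0") (auto simp: is_weight_def eps_def)
qed

lemma cone_Q_Delta_of_partial_sums_nonneg:
  assumes "1 \<le> r" "is_weight r v" "\<forall>k\<le>r. 0 \<le> partial_sum v k"
  shows "cone_Q (Delta r) v"
proof -
  have root: "rat_cone (Delta r) (\<lambda>m. of_int (simple_root r l m))" if "l \<in> {1..r}" for l
    using that by (intro rat_cone_generator) (auto simp: Delta_def)
  have "rat_cone (Delta r) (\<lambda>m. (\<Sum>l\<in>{1..<r}. of_int (partial_sum v l) * of_int (simple_root r l m))
      + of_int (partial_sum v r) / 2 * of_int (simple_root r r m))"
    using assms(1,3) by (intro rat_cone_add rat_cone_sum rat_cone_scale root) auto
  moreover have "(\<Sum>l\<in>{1..<r}. of_int (partial_sum v l) * of_int (simple_root r l m))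
      + of_int (partial_sum v r) / 2 * of_int (simple_root r r m) = (of_int (v m) :: rat)" for m
    using weight_eq_sum_partial_sums[OF assms(2), of m] by (simp add: simple_root_def)
  ultimately show ?thesis
    by (simp add: cone_Q_iff_rat_cone)
qed

lemma cone_N_Delta_of_partial_sums:
  assumes "1 \<le> r" "is_weight r v" "\<forall>k\<le>r. 0 \<le> partial_sum v k" "even (partial_sum v r)"
  shows "cone_N (Delta r) v"
proof -
  have root: "cone_N (Delta r) (simple_root r l)" if "l \<in> {1..r}" for l
    using that by (intro cone_N_generator) (auto simp: Delta_def)
  have "cone_N (Delta r) (\<lambda>m. (\<Sum>l\<in>{1..<r}. int (nat (partial_sum v l)) * simple_root r l m)
      + int (nat (partial_sum v r div 2)) * simple_root r r m)"
    using assms(1) by (intro cone_N_add cone_N_sum cone_N_scale root) auto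
  moreover have "(\<Sum>l\<in>{1..<r}. int (nat (partial_sum v l)) * simple_root r l m)
      + int (nat (partial_sum v r div 2)) * simple_root r r m = v m" for m
    using weight_eq_sum_partial_sums[OF assms(2), of m] assms(3,4) by (simp add: simple_root_def)
  ultimately show ?thesis
    by simp
qed

section \<open>Dominant weights\<close>

lemma dominant_coroot_pair_nonneg: "dominant r v \<Longrightarrow> i \<in> {1..r} \<Longrightarrow> 0 \<le> coroot_pair r v i"
  by (simp add: dominant_def)

lemma dominant_antimono:
  assumes "dominant r v" "1 \<le> a" "a \<le> b" "b \<le> r"
  shows "v b \<le> v a"
  using assms(3,4)
proof (induction b rule: dec_induct)
  case (step n)
  then have "v (Suc n) \<le> v n"
    using dominant_coroot_pair_nonneg[OF assms(1), of n] assms(2) by (simp add: coroot_pair_def)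
  with step show ?case
    by simp
qed simp

lemma dominant_nonneg:
  assumes "dominant r v"
  shows "0 \<le> v k"
proof (cases "k \<in> {1..r}")
  case True
  then have "v r \<le> v k"
    using dominant_antimono[OF assms] by auto
  moreover have "0 \<le> v r"
    using dominant_coroot_pair_nonneg[OF assms, of r] True by (simp add: coroot_pair_def)
  ultimately show ?thesis
    by simp
next
  case False
  then show ?thesis
    using assms by (simp add: dominant_def is_weight_def)
qed

lemma coroot_pair_pos_of_supp: "dominant r v \<Longrightarrow> i \<in> supp r v \<Longrightarrow> 0 < coroot_pair r v i"
  by (auto simp: dominant_def supp_def order_less_le)

lemma supp_nonempty:
  assumes "dominant r lam" "lam \<noteq> (\<lambda>k. 0)"
  shows "supp r lam \<noteq> {}"
proof -
  obtain i where "lam i \<noteq> 0"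
    using assms(2) by auto
  moreover from this have "i \<in> {1..r}"
    using assms(1) by (auto simp: dominant_def is_weight_def)
  ultimately show ?thesis
    using supp_above[of i r lam] by auto
qed

lemma zero_beyond_supp:
  assumes "dominant r lam" "\<forall>k\<in>supp r lam. k \<le> q" "q < j"
  shows "lam j = 0"
proof (rule ccontr)
  assume "lam j \<noteq> 0"
  moreover from this have "j \<le> r"
    using assms(1) by (auto simp: dominant_def is_weight_def)
  ultimately obtain k where "k \<in> supp r lam" "j \<le> k"
    using supp_above[of j r lam] assms(3) by auto
  with assms(2,3) show False
    by fastforce
qed

lemma dominant_wsub_eps:
  assumes "dominant r lam" "q \<in> supp r lam"
  shows "dominant r (wsub lam (eps q))"
proof -
  have q: "q \<in> {1..r}"
    using assms(2) by (simp add: supp_def)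
  have "0 \<le> coroot_pair r (wsub lam (eps q)) i" if "i \<in> {1..r}" for i
  proof -
    have "coroot_pair r (eps q) i \<le> (if i = q then 1 else 0)"
      using q that by (auto simp: coroot_pair_def eps_def)
    moreover have "0 \<le> coroot_pair r lam i" "i = q \<Longrightarrow> 0 < coroot_pair r lam i"
      using assms that coroot_pair_pos_of_supp[OF assms] by (auto simp: dominant_def)
    ultimately show ?thesis
      by (auto simp: coroot_pair_def wsub_def split: if_splits)
  qed
  with assms(1) q show ?thesis
    by (auto simp: dominant_def is_weight_def wsub_def eps_def)
qed

lemma wsub_eps_in_Pi_plus_G_diff:
  assumes "1 \<le> r" "dominant r lam" "q \<in> supp r lam"
  shows "wsub lam (eps q) \<in> Pi_plus_G r lam - Pi_plus r lam"
proof -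
  have q: "1 \<le> q" "q \<le> r"
    using assms(3) by (auto simp: supp_def)
  have diff: "wsub lam (wsub lam (eps q)) = eps q"
    by (simp add: wsub_def)
  have "cone_Q (Delta r) (eps q)"
    using assms(1) q by (intro cone_Q_Delta_of_partial_sums_nonneg is_weight_eps) (auto simp: partial_sum_eps)
  moreover have "\<not> cone_N (Delta r) (eps q)"
    using even_partial_sum_of_cone_N_Delta[of r "eps q"] q by (auto simp: partial_sum_eps)
  ultimately show ?thesis
    using dominant_wsub_eps[OF assms(2,3)] by (simp add: Pi_plus_G_def Pi_plus_def diff)
qed

section \<open>The greatest candidate\<close>

lemma LB_le_wsub_eps:
  assumes "dominant r lam" "q \<in> supp r lam" "\<forall>k\<in>supp r lam. k \<le> q" "\<nu> \<in> LB r lam"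
  shows "leQ r lam \<nu> (wsub lam (eps q))"
proof -
  have r: "2 \<le> r" "r - 1 \<notin> supp r lam" "r \<in> supp r lam"
    and \<nu>: "\<nu> = wsub (wsub lam (simple_root r (r - 1))) (simple_root r r)"
    using assms(4) by (auto simp: LB_def split: if_splits)
  have "q = r"
    using assms(2) assms(3) r(3) by (fastforce simp: supp_def)
  with r have diff: "wsub (wsub lam (eps q)) \<nu> = eps (r - 1)"
    by (auto simp: \<nu> fun_eq_iff wsub_def simple_root_def eps_def)
  have "lam (r - 1) = lam r" "lam r \<noteq> 0"
    using r by (auto simp: supp_def coroot_pair_def)
  then have "lam (r - 1) \<noteq> 0"
    by simp
  show ?thesis
    unfolding leQ_def diff
  proof (rule cone_Q_pos_roots_lam)
    show "is_weight r (eps (r - 1))"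
      using r(1) by (intro is_weight_eps) auto
    show "\<forall>k\<le>r. 0 \<le> partial_sum (eps (r - 1)) k"
      by (simp add: partial_sum_eps)
    show "lam i \<noteq> lam j"
      if "1 \<le> i" "i < j" "j \<le> r" "0 < eps (r - 1) i" "eps (r - 1) j < 0" for i j
      using that(5) by (simp add: eps_def split: if_splits)
    show "lam i \<noteq> 0" if "1 \<le> i" "i \<le> r" "0 < eps (r - 1) i" for i
      using that(3) \<open>lam (r - 1) \<noteq> 0\<close> by (simp add: eps_def split: if_splits)
  qed
qed

lemma partial_sums_of_Pi_plus_G_diff:
  assumes "1 \<le> r" "dominant r lam" "\<nu> \<in> Pi_plus_G r lam - Pi_plus r lam"
  shows "is_weight r (wsub lam \<nu>)" "0 \<le> partial_sum (wsub lam \<nu>) k" "1 \<le> partial_sum (wsub lam \<nu>) r"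
proof -
  have dom_\<nu>: "dominant r \<nu>" and cone_Q: "cone_Q (Delta r) (wsub lam \<nu>)"
    and not_cone_N: "\<not> cone_N (Delta r) (wsub lam \<nu>)"
    using assms(3) by (auto simp: Pi_plus_G_def Pi_plus_def)
  show weight: "is_weight r (wsub lam \<nu>)"
    using assms(2) dom_\<nu> by (simp add: dominant_def is_weight_def wsub_def)
  show nonneg: "0 \<le> partial_sum (wsub lam \<nu>) k" for k
    using cone_Q by (rule partial_sum_nonneg_of_cone_Q_Delta)
  have "odd (partial_sum (wsub lam \<nu>) r)"
    using not_cone_N cone_N_Delta_of_partial_sums[OF assms(1) weight] nonneg by blast
  then have "partial_sum (wsub lam \<nu>) r \<noteq> 0"
    by auto
  with nonneg[of r] show "1 \<le> partial_sum (wsub lam \<nu>) r"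
    by linarith
qed

lemma partial_sum_wsub_eps_nonneg:
  assumes "\<And>k. 0 \<le> partial_sum d k" "1 \<le> partial_sum d r" "\<And>i. q < i \<Longrightarrow> d i \<le> 0" "k \<le> r"
  shows "0 \<le> partial_sum (wsub d (eps q)) k"
proof (cases "q \<le> k")
  case True
  then have "partial_sum d r \<le> partial_sum d k"
    using assms(3,4) by (intro partial_sum_le_of_nonpos_tail) auto
  with assms(2) show ?thesis
    by (simp add: partial_sum_wsub partial_sum_eps)
next
  case False
  then show ?thesis
    using assms(1)[of k] by (simp add: partial_sum_wsub partial_sum_eps)
qed

lemma Pi_plus_G_diff_le_wsub_eps:
  assumes "1 \<le> r" "dominant r lam" "q \<in> supp r lam" "\<forall>k\<in>supp r lam. k \<le> q"
    and "\<nu> \<in> Pi_plus_G r lam - Pi_plus r lam"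
  shows "leQ r lam \<nu> (wsub lam (eps q))"
proof -
  define d where "d = wsub lam \<nu>"
  have dom_\<nu>: "dominant r \<nu>"
    using assms(5) by (simp add: Pi_plus_G_def)
  note d_props = partial_sums_of_Pi_plus_G_diff[OF assms(1,2,5), folded d_def]
  have q: "1 \<le> q" "q \<le> r"
    using assms(3) by (auto simp: supp_def)
  have diff: "wsub (wsub lam (eps q)) \<nu> = wsub d (eps q)"
    by (simp add: fun_eq_iff wsub_def d_def)
  show ?thesis
    unfolding leQ_def diff
  proof (rule cone_Q_pos_roots_lam)
    show "is_weight r (wsub d (eps q))"
      using d_props(1) is_weight_eps[OF q] by (simp add: is_weight_def wsub_def)
    have "d i \<le> 0" if "q < i" for i
      using zero_beyond_supp[OF assms(2,4) that] dominant_nonneg[OF dom_\<nu>, of i]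
      by (simp add: d_def wsub_def)
    then show "\<forall>k\<le>r. 0 \<le> partial_sum (wsub d (eps q)) k"
      using d_props(2,3) by (blast intro: partial_sum_wsub_eps_nonneg)
    show "lam i \<noteq> lam j" if "1 \<le> i" "i < j" "j \<le> r" "0 < wsub d (eps q) i" "wsub d (eps q) j < 0" for i j
    proof
      assume eq: "lam i = lam j"
      have "\<nu> j \<le> \<nu> i"
        using dominant_antimono[OF dom_\<nu>] that by auto
      moreover have "lam j \<le> \<nu> j"
        using that(5) by (simp add: d_def wsub_def eps_def split: if_splits)
      moreover have "i \<noteq> q"
      proof
        assume "i = q"
        then have "lam j < lam i"
          using coroot_pair_pos_of_supp[OF assms(2,3)] dominant_antimono[OF assms(2), of "Suc i" j] that q
          by (auto simp: coroot_pair_def)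
        with eq show False
          by simp
      qed
      then have "\<nu> i < lam i"
        using that(4) by (simp add: d_def wsub_def eps_def)
      ultimately show False
        using eq by simp
    qed
    show "lam i \<noteq> 0" if "1 \<le> i" "i \<le> r" "0 < wsub d (eps q) i" for i
      using that(3) dominant_nonneg[OF dom_\<nu>, of i] by (auto simp: d_def wsub_def eps_def split: if_splits)
  qed
qed

lemma LB_G_eq_greatest:
  assumes "\<mu> \<in> (Pi_plus_G r lam - Pi_plus r lam) \<union> LB r lam"
    and "\<And>\<nu>. \<nu> \<in> (Pi_plus_G r lam - Pi_plus r lam) \<union> LB r lam \<Longrightarrow> leQ r lam \<nu> \<mu>"
  shows "LB_G r lam = {\<mu>}"
  using assms leQ_antisym unfolding LB_G_def Let_def by blast

theorem proposition2p15:
  fixes r q :: nat and lam :: wt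
  assumes "1 \<le> r"
    and "dominant r lam"
    and "lam \<noteq> (\<lambda>k. 0)"
    and "q = Max (supp r lam)"
  shows "LB_G r lam = {wsub (wadd lam (fund_weight (q - 1))) (fund_weight q)}"
proof -
  have finite: "finite (supp r lam)"
    by (simp add: supp_def)
  have q_supp: "q \<in> supp r lam" and q_max: "\<forall>k\<in>supp r lam. k \<le> q"
    using Max_in[OF finite supp_nonempty[OF assms(2,3)]] Max_ge[OF finite] assms(4) by auto
  then have "wsub (wadd lam (fund_weight (q - 1))) (fund_weight q) = wsub lam (eps q)"
    by (auto simp: fun_eq_iff wsub_def wadd_def fund_weight_def eps_def supp_def)
  moreover have "LB_G r lam = {wsub lam (eps q)}"
    using wsub_eps_in_Pi_plus_G_diff[OF assms(1,2) q_supp]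
      LB_le_wsub_eps[OF assms(2) q_supp q_max] Pi_plus_G_diff_le_wsub_eps[OF assms(1,2) q_supp q_max]
    by (intro LB_G_eq_greatest) auto
  ultimately show ?thesis
    by simp
qed

end
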